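(* Let $G=(V,E)$ be an undirected graph (finite or infinite) and $M=M(S)$, $M'=M(S')$ two maximal multiplices of $G$. If $M\cap M'\neq\emptyset$ then $M=M'$.
   Context: A graph $G=(V,E)$ has vertex set $V$ and edge set $E\subseteq V^2$; it is undirected if $E$ is irreflexive and symmetric. Implication classes: on $E$ define $(a,b)\Gamma(a',b')$ iff either $a=a'$ and $(b,b')\notin E$, or $b=b'$ and $(a,a')\notin E$; the classes of the transitive closure $\Gamma^*$ are the implication classes. For an implication class $A$, $A^{-1}=\{(b,a):(a,b)\in A\}$ and the color class is $\widehat A=A\cup A^{-1}$. A simplex of rank $r\ge1$ is a complete sub-graph $S=(V_S,E_S)$ of $G$ on $r+1$ vertices whose distinct undirected edges lie in distinct color classes; it is maximal if not properly contained in a larger simplex. The multiplex generated by $S$ is $M(S)=\bigcup\{\widehat A:\widehat A\text{ a color class},\ \widehat A\cap E_S\neq\emptyset\}$; it is maximal if $S$ is maximal. *)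

theory Defs
  imports Main
begin

definition undirected_graph :: "'a set \<Rightarrow> ('a \<times> 'a) set \<Rightarrow> bool" where
  "undirected_graph V E \<longleftrightarrow> E \<subseteq> V \<times> V \<and> irrefl E \<and> sym E"

definition Gamma :: "('a \<times> 'a) set \<Rightarrow> (('a \<times> 'a) \<times> ('a \<times> 'a)) set" where
  "Gamma E = {((a,b),(a',b')). (a,b) \<in> E \<and> (a',b') \<in> E \<and>
      ((a = a' \<and> (b,b') \<notin> E) \<or> (b = b' \<and> (a,a') \<notin> E))}"

definition impl_class :: "('a \<times> 'a) set \<Rightarrow> ('a \<times> 'a) \<Rightarrow> ('a \<times> 'a) set" where
  "impl_class E e = {f. (e, f) \<in> (Gamma E)\<^sup>+}"

definition implication_classes :: "('a \<times> 'a) set \<Rightarrow> ('a \<times> 'a) set set" where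
  "implication_classes E = {impl_class E e | e. e \<in> E}"

definition color_classes :: "('a \<times> 'a) set \<Rightarrow> ('a \<times> 'a) set set" where
  "color_classes E = {A \<union> A\<inverse> | A. A \<in> implication_classes E}"

definition complete_edges :: "'a set \<Rightarrow> ('a \<times> 'a) set" where
  "complete_edges VS = {(x,y). x \<in> VS \<and> y \<in> VS \<and> x \<noteq> y}"

text \<open>A simplex (of some rank r \<ge> 1), represented by its vertex set VS (r+1 vertices).\<close>
definition simplex :: "'a set \<Rightarrow> ('a \<times> 'a) set \<Rightarrow> 'a set \<Rightarrow> bool" where
  "simplex V E VS \<longleftrightarrow> finite VS \<and> card VS \<ge> 2 \<and> VS \<subseteq> V \<and> complete_edges VS \<subseteq> E \<and>
     (\<forall>C \<in> color_classes E. \<forall>e \<in> complete_edges VS. \<forall>f \<in> complete_edges VS.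
        e \<in> C \<and> f \<in> C \<longrightarrow> {fst e, snd e} = {fst f, snd f})"

definition maximal_simplex :: "'a set \<Rightarrow> ('a \<times> 'a) set \<Rightarrow> 'a set \<Rightarrow> bool" where
  "maximal_simplex V E VS \<longleftrightarrow> simplex V E VS \<and> \<not> (\<exists>VS'. simplex V E VS' \<and> VS \<subset> VS')"

definition multiplex :: "('a \<times> 'a) set \<Rightarrow> 'a set \<Rightarrow> ('a \<times> 'a) set" where
  "multiplex E VS = \<Union>{C \<in> color_classes E. C \<inter> complete_edges VS \<noteq> {}}"

end

theory Submission
  imports Defs
begin

(* Exchanging an edge p q of a simplex for an edge y0 y1 of its implication class yields again a
   simplex with the same multiplex: by the Triangle Lemma every further vertex z is joined to y0 and
   y1 by edges in the classes of z p and q z.  The exchange can be reversed, so it also preserves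
   maximality.  As M(S) and M(S') share a colour class, one exchange turns S into a maximal simplex T
   with M(T) = M(S) that shares an edge with S'.  Let w be a vertex of S' outside T.  If some edge
   from T to w lies in M(T), a further exchange enlarges the common part of T and S' by w.
   Otherwise w is adjacent to all of T, and the Triangle Lemma, applied at a common vertex of T and
   S', shows that the edges from w to T have pairwise distinct colours outside M(T); then T with w
   added would be a larger simplex.  Hence the common part grows until S' is contained in T, and
   then S' = T. *)

definition color_class :: "('a \<times> 'a) set \<Rightarrow> 'a \<times> 'a \<Rightarrow> ('a \<times> 'a) set" where
  "color_class E e = impl_class E e \<union> (impl_class E e)\<inverse>"

lemma two_le_cardE:
  assumes "2 \<le> card A"
  obtains a b where "a \<in> A" "b \<in> A" "a \<noteq> b"
proof -
  have "finite A"
    using assms by (intro card_ge_0_finite) linarith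
  then have "\<not> (\<forall>a\<in>A. \<forall>b\<in>A. a = b)"
    using card_le_Suc0_iff_eq assms by fastforce
  then show ?thesis
    using that by blast
qed

locale ugraph =
  fixes V :: "'a set" and E :: "('a \<times> 'a) set"
  assumes undirected: "undirected_graph V E"
begin

lemma edge_sym: "(a, b) \<in> E \<Longrightarrow> (b, a) \<in> E"
  using undirected unfolding undirected_graph_def sym_def by blast

lemma edge_irrefl: "(a, a) \<notin> E"
  using undirected unfolding undirected_graph_def irrefl_def by blast

lemma edge_in_V: "(a, b) \<in> E \<Longrightarrow> a \<in> V"
  using undirected unfolding undirected_graph_def by blast

lemma Gamma_sym: "(e, f) \<in> Gamma E \<Longrightarrow> (f, e) \<in> Gamma E"
  unfolding Gamma_def using edge_sym by auto

lemma Gamma_swap: "((a, b), (c, d)) \<in> Gamma E \<Longrightarrow> ((b, a), (d, c)) \<in> Gamma E"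
  unfolding Gamma_def using edge_sym by auto

lemma Gamma_refl: "e \<in> E \<Longrightarrow> (e, e) \<in> Gamma E"
  unfolding Gamma_def using edge_irrefl by (cases e) auto

lemma impl_class_refl: "e \<in> E \<Longrightarrow> e \<in> impl_class E e"
  unfolding impl_class_def using Gamma_refl by blast

lemma impl_class_Gamma: "(e, f) \<in> Gamma E \<Longrightarrow> f \<in> impl_class E e"
  unfolding impl_class_def by blast

lemma impl_class_subset: "impl_class E e \<subseteq> E"
  unfolding impl_class_def Gamma_def by (auto elim: trancl.cases)

lemma impl_class_sym: "f \<in> impl_class E e \<Longrightarrow> e \<in> impl_class E f"
proof -
  have "sym (Gamma E)"
    using Gamma_sym unfolding sym_def by blast
  then have "sym ((Gamma E)\<^sup>+)"
    by (rule sym_trancl)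
  then show "f \<in> impl_class E e \<Longrightarrow> e \<in> impl_class E f"
    unfolding impl_class_def sym_def by blast
qed

lemma impl_class_trans: "f \<in> impl_class E e \<Longrightarrow> g \<in> impl_class E f \<Longrightarrow> g \<in> impl_class E e"
  unfolding impl_class_def by (meson mem_Collect_eq trancl_trans)

lemma impl_class_eq: "f \<in> impl_class E e \<Longrightarrow> impl_class E f = impl_class E e"
  using impl_class_trans impl_class_sym by blast

lemma impl_class_swap: "(c, d) \<in> impl_class E (a, b) \<Longrightarrow> (d, c) \<in> impl_class E (b, a)"
proof -
  have "(prod.swap e, prod.swap f) \<in> (Gamma E)\<^sup>+" if "(e, f) \<in> (Gamma E)\<^sup>+" for e f
    using that
  proof (induction rule: trancl_induct)
    case (base f)
    then show ?case
      using Gamma_swap by (metis prod.collapse swap_simp r_into_trancl)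
  next
    case (step f g)
    then show ?case
      using Gamma_swap by (metis prod.collapse swap_simp trancl_into_trancl)
  qed
  then show "(c, d) \<in> impl_class E (a, b) \<Longrightarrow> (d, c) \<in> impl_class E (b, a)"
    unfolding impl_class_def by fastforce
qed

lemma converse_impl_class: "(impl_class E (a, b))\<inverse> = impl_class E (b, a)"
  using impl_class_swap by fastforce

lemma color_class_pair: "color_class E (a, b) = impl_class E (a, b) \<union> impl_class E (b, a)"
  unfolding color_class_def converse_impl_class ..

lemma color_class_swap: "color_class E (b, a) = color_class E (a, b)"
  unfolding color_class_pair by blast

lemma mem_color_class_swap: "(u, v) \<in> color_class E e \<Longrightarrow> (v, u) \<in> color_class E e"
  unfolding color_class_def by blast

lemma mem_color_class_doubleton:
  "{u, v} = {a, b} \<Longrightarrow> (u, v) \<in> color_class E e \<Longrightarrow> (a, b) \<in> color_class E e"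
  by (metis doubleton_eq_iff mem_color_class_swap)

lemma mem_color_class_swap_both: "(u, v) \<in> color_class E (x, y) \<Longrightarrow> (v, u) \<in> color_class E (y, x)"
  using mem_color_class_swap color_class_swap by metis

lemma color_class_refl: "e \<in> E \<Longrightarrow> e \<in> color_class E e"
  unfolding color_class_def using impl_class_refl by blast

lemma impl_class_subset_color_class: "impl_class E e \<subseteq> color_class E e"
  unfolding color_class_def by blast

lemma color_class_subset: "color_class E e \<subseteq> E"
  unfolding color_class_def using impl_class_subset edge_sym by blast

lemma color_class_eq:
  assumes "f \<in> color_class E e"
  shows "color_class E f = color_class E e"
proof -
  obtain a b c d where ef: "e = (a, b)" "f = (c, d)"
    by fastforce
  have "color_class E (c, d) = color_class E (a, b)" if "(c, d) \<in> impl_class E (a, b)" for a b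
    using impl_class_eq[OF that] impl_class_eq[OF impl_class_swap[OF that]]
    unfolding color_class_pair by simp
  moreover from assms have "(c, d) \<in> impl_class E (a, b) \<or> (c, d) \<in> impl_class E (b, a)"
    unfolding ef color_class_pair by blast
  ultimately show ?thesis
    unfolding ef using color_class_swap by metis
qed

lemma edge_of_mem_color_class: "f \<in> color_class E e \<Longrightarrow> e \<in> E"
  unfolding color_class_def using impl_class_sym impl_class_subset by blast

lemma color_class_sym: "f \<in> color_class E e \<Longrightarrow> e \<in> color_class E f"
  using color_class_eq color_class_refl edge_of_mem_color_class by blast

lemma color_classes_eq: "color_classes E = color_class E ` E"
  unfolding color_classes_def implication_classes_def color_class_def by blast

lemma simplex_edge: "simplex V E T \<Longrightarrow> x \<in> T \<Longrightarrow> y \<in> T \<Longrightarrow> x \<noteq> y \<Longrightarrow> (x, y) \<in> E"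
  unfolding simplex_def complete_edges_def by blast

lemma simplex_color_class_unique:
  assumes "simplex V E T" "x \<in> T" "y \<in> T" "u \<in> T" "v \<in> T" "x \<noteq> y" "u \<noteq> v"
    and "(u, v) \<in> color_class E (x, y)"
  shows "{u, v} = {x, y}"
proof -
  have "(x, y) \<in> E"
    using assms simplex_edge by blast
  then have "color_class E (x, y) \<in> color_classes E" "(x, y) \<in> color_class E (x, y)"
    by (auto simp: color_classes_eq color_class_refl)
  moreover have "(x, y) \<in> complete_edges T" "(u, v) \<in> complete_edges T"
    using assms unfolding complete_edges_def by auto
  ultimately show ?thesis
    using assms(1,8) unfolding simplex_def by fastforce
qed

lemma simplexI:
  assumes "finite T" "2 \<le> card T"
    and edge: "\<And>x y. x \<in> T \<Longrightarrow> y \<in> T \<Longrightarrow> x \<noteq> y \<Longrightarrow> (x, y) \<in> E"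
    and unique: "\<And>x y u v. x \<in> T \<Longrightarrow> y \<in> T \<Longrightarrow> u \<in> T \<Longrightarrow> v \<in> T \<Longrightarrow> x \<noteq> y \<Longrightarrow> u \<noteq> v \<Longrightarrow>
      (u, v) \<in> color_class E (x, y) \<Longrightarrow> {u, v} = {x, y}"
  shows "simplex V E T"
  unfolding simplex_def
proof (intro conjI ballI impI)
  show "T \<subseteq> V"
  proof
    fix x
    assume "x \<in> T"
    moreover obtain y where "y \<in> T" "y \<noteq> x"
      using two_le_cardE[OF assms(2)] by metis
    ultimately show "x \<in> V"
      using edge edge_in_V by blast
  qed
  show "complete_edges T \<subseteq> E"
    unfolding complete_edges_def using edge by blast
  fix C e f
  assume "C \<in> color_classes E" "e \<in> complete_edges T" "f \<in> complete_edges T" "e \<in> C \<and> f \<in> C"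
  then have "f \<in> color_class E e"
    unfolding color_classes_eq using color_class_eq by blast
  moreover obtain x y u v where "e = (x, y)" "f = (u, v)" "x \<in> T" "y \<in> T" "u \<in> T" "v \<in> T"
    "x \<noteq> y" "u \<noteq> v"
    using \<open>e \<in> complete_edges T\<close> \<open>f \<in> complete_edges T\<close> unfolding complete_edges_def by auto
  ultimately show "{fst e, snd e} = {fst f, snd f}"
    using unique by force
qed (use assms in simp_all)

lemma simplex_finite: "simplex V E T \<Longrightarrow> finite T"
  and simplex_card: "simplex V E T \<Longrightarrow> 2 \<le> card T"
  unfolding simplex_def by blast+

lemma mem_multiplex_iff:
  assumes "simplex V E T"
  shows "f \<in> multiplex E T \<longleftrightarrow> (\<exists>x\<in>T. \<exists>y\<in>T. x \<noteq> y \<and> f \<in> color_class E (x, y))"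
proof
  assume "f \<in> multiplex E T"
  then obtain g e where "g \<in> E" "e \<in> color_class E g" "e \<in> complete_edges T" "f \<in> color_class E g"
    unfolding multiplex_def color_classes_eq by blast
  then show "\<exists>x\<in>T. \<exists>y\<in>T. x \<noteq> y \<and> f \<in> color_class E (x, y)"
    unfolding complete_edges_def using color_class_eq by fastforce
next
  assume "\<exists>x\<in>T. \<exists>y\<in>T. x \<noteq> y \<and> f \<in> color_class E (x, y)"
  then obtain x y where xy: "x \<in> T" "y \<in> T" "x \<noteq> y" "f \<in> color_class E (x, y)"
    by blast
  then have "(x, y) \<in> E"
    using assms simplex_edge by blast
  then have "(x, y) \<in> color_class E (x, y) \<inter> complete_edges T" "color_class E (x, y) \<in> color_classes E"
    using xy by (auto simp: color_class_refl complete_edges_def color_classes_eq)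
  then show "f \<in> multiplex E T"
    unfolding multiplex_def using xy(4) by blast
qed

lemma triangle_lemma_step:
  assumes n1: "(b, c) \<notin> impl_class E (b, a)" and n2: "(b, c) \<notin> impl_class E (a, c)"
    and ab1: "(a, b1) \<in> impl_class E (a, b)" and c1a: "(c1, a) \<in> impl_class E (c, a)"
    and b1c1: "(b1, c1) \<in> impl_class E (b, c)" and step: "((b1, c1), (b2, c2)) \<in> Gamma E"
  shows "(a, b2) \<in> impl_class E (a, b) \<and> (c2, a) \<in> impl_class E (c, a)"
proof -
  have b2c2: "(b2, c2) \<in> impl_class E (b, c)"
    using b1c1 impl_class_Gamma[OF step] impl_class_trans by blast
  have E: "(a, b1) \<in> E" "(c1, a) \<in> E" "(b1, c1) \<in> E" "(b2, c2) \<in> E"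
    using ab1 c1a b1c1 b2c2 impl_class_subset by blast+
  from step consider "b1 = b2" "(c1, c2) \<notin> E" | "c1 = c2" "(b1, b2) \<notin> E"
    unfolding Gamma_def by auto
  then show ?thesis
  proof cases
    case 1
    have "(a, c2) \<in> E"
    proof (rule ccontr)
      assume "(a, c2) \<notin> E"
      then have "((b1, a), (b1, c2)) \<in> Gamma E"
        unfolding Gamma_def using E edge_sym 1 by auto
      then have "(b1, c2) \<in> impl_class E (b, a)"
        using impl_class_swap[OF ab1] impl_class_Gamma impl_class_trans by blast
      then show False
        using n1 b2c2 1 impl_class_sym impl_class_trans by blast
    qed
    then have "((c1, a), (c2, a)) \<in> Gamma E"
      unfolding Gamma_def using E edge_sym 1 by auto
    then show ?thesis
      using ab1 c1a impl_class_Gamma impl_class_trans 1 by blast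
  next
    case 2
    have "(a, b2) \<in> E"
    proof (rule ccontr)
      assume "(a, b2) \<notin> E"
      then have "((b2, c1), (a, c1)) \<in> Gamma E"
        unfolding Gamma_def using E edge_sym 2 by auto
      then have "(a, c1) \<in> impl_class E (b, c)"
        using b2c2 2 impl_class_Gamma impl_class_trans by blast
      then show False
        using n2 impl_class_swap[OF c1a] impl_class_sym impl_class_trans by blast
    qed
    then have "((a, b1), (a, b2)) \<in> Gamma E"
      unfolding Gamma_def using E 2 by auto
    then show ?thesis
      using ab1 c1a impl_class_Gamma impl_class_trans 2 by blast
  qed
qed

lemma triangle_lemma:
  assumes "(a, b) \<in> E" "(c, a) \<in> E"
    and "(b, c) \<notin> impl_class E (b, a)" "(b, c) \<notin> impl_class E (a, c)"
    and "(b', c') \<in> impl_class E (b, c)"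
  shows "(a, b') \<in> impl_class E (a, b) \<and> (c', a) \<in> impl_class E (c, a)"
proof -
  have "((b, c), (b', c')) \<in> (Gamma E)\<^sup>*"
    using assms(5) unfolding impl_class_def by auto
  then show ?thesis
  proof (induction "(b', c')" arbitrary: b' c' rule: rtrancl_induct)
    case base
    then show ?case
      using assms(1,2) impl_class_refl by blast
  next
    case (step f)
    obtain b1 c1 where f: "f = (b1, c1)"
      by fastforce
    have "(b, c) \<in> E"
      using assms(5) impl_class_sym impl_class_subset by blast
    then have "(b1, c1) \<in> impl_class E (b, c)"
      using step(1) impl_class_refl unfolding f impl_class_def rtrancl_eq_or_trancl by auto
    with step(2,3) show ?case
      using triangle_lemma_step[OF assms(3,4)] unfolding f by blast
  qed
qed

lemma simplex_impl_class_third_vertex: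
  assumes T: "simplex V E T" and pq: "p \<in> T" "q \<in> T" "p \<noteq> q"
    and y: "(y0, y1) \<in> impl_class E (p, q)" and z: "z \<in> T" "z \<noteq> p" "z \<noteq> q"
  shows "(z, y0) \<in> impl_class E (z, p) \<and> (y1, z) \<in> impl_class E (q, z)"
proof (rule triangle_lemma[OF _ _ _ _ y])
  show "(z, p) \<in> E" "(q, z) \<in> E"
    using simplex_edge[OF T] pq z by auto
  show "(p, q) \<notin> impl_class E (p, z)"
  proof
    assume "(p, q) \<in> impl_class E (p, z)"
    then have "{p, q} = {p, z}"
      using simplex_color_class_unique[OF T] impl_class_subset_color_class pq z by blast
    then show False
      using z by (auto simp: doubleton_eq_iff)
  qed
  show "(p, q) \<notin> impl_class E (z, q)"
  proof
    assume "(p, q) \<in> impl_class E (z, q)"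
    then have "{p, q} = {z, q}"
      using simplex_color_class_unique[OF T] impl_class_subset_color_class pq z by blast
    then show False
      using pq z by (auto simp: doubleton_eq_iff)
  qed
qed

lemma simplex_impl_class_outside:
  assumes "simplex V E T" "p \<in> T" "q \<in> T" "p \<noteq> q" "(y0, y1) \<in> impl_class E (p, q)"
  shows "y0 \<notin> T - {p, q}" "y1 \<notin> T - {p, q}"
  using simplex_impl_class_third_vertex[OF assms] impl_class_subset edge_irrefl by blast+

lemma simplex_color_preserving_bij:
  assumes T: "simplex V E T" and \<phi>: "bij_betw \<phi> T' T"
    and rel: "\<And>u v. u \<in> T' \<Longrightarrow> v \<in> T' \<Longrightarrow> u \<noteq> v \<Longrightarrow> (u, v) \<in> color_class E (\<phi> u, \<phi> v)"
  shows "simplex V E T' \<and> multiplex E T' = multiplex E T"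
proof -
  have inj: "inj_on \<phi> T'" and im: "\<phi> ` T' = T"
    using \<phi> unfolding bij_betw_def by auto
  have \<phi>_neq: "\<phi> u \<noteq> \<phi> v" if "u \<in> T'" "v \<in> T'" "u \<noteq> v" for u v
    using inj that unfolding inj_on_def by blast
  have color_eq: "color_class E (u, v) = color_class E (\<phi> u, \<phi> v)"
    if "u \<in> T'" "v \<in> T'" "u \<noteq> v" for u v
    using color_class_eq[OF rel[OF that]] .
  have edge: "(u, v) \<in> E" if "u \<in> T'" "v \<in> T'" "u \<noteq> v" for u v
    using rel[OF that] color_class_subset by blast
  have simplex: "simplex V E T'"
  proof (rule simplexI)
    show "finite T'" "2 \<le> card T'"
      using simplex_finite[OF T] simplex_card[OF T] bij_betw_finite[OF \<phi>] bij_betw_same_card[OF \<phi>]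
      by auto
  next
    fix x y u v
    assume xyuv: "x \<in> T'" "y \<in> T'" "u \<in> T'" "v \<in> T'" "x \<noteq> y" "u \<noteq> v"
      and uv: "(u, v) \<in> color_class E (x, y)"
    have \<phi>_in: "\<phi> x \<in> T" "\<phi> y \<in> T" "\<phi> u \<in> T" "\<phi> v \<in> T"
      using xyuv im by auto
    have "color_class E (\<phi> u, \<phi> v) = color_class E (\<phi> x, \<phi> y)"
      using color_eq[of u v] color_eq[of x y] color_class_eq[OF uv] xyuv by simp
    moreover have "(\<phi> u, \<phi> v) \<in> color_class E (\<phi> u, \<phi> v)"
      using color_class_refl simplex_edge[OF T \<phi>_in(3,4) \<phi>_neq[of u v]] xyuv by blast
    ultimately have "{\<phi> u, \<phi> v} = {\<phi> x, \<phi> y}"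
      using simplex_color_class_unique[OF T \<phi>_in] \<phi>_neq xyuv by simp
    then have "\<phi> ` {u, v} = \<phi> ` {x, y}"
      by simp
    moreover have "{u, v} \<subseteq> T'" "{x, y} \<subseteq> T'"
      using xyuv by auto
    ultimately show "{u, v} = {x, y}"
      using inj_on_image_eq_iff[OF inj] by blast
  qed (use edge in blast)
  have "multiplex E T' = multiplex E T"
    unfolding set_eq_iff mem_multiplex_iff[OF simplex] mem_multiplex_iff[OF T]
    unfolding im[symmetric] using color_eq \<phi>_neq by fastforce
  with simplex show ?thesis ..
qed

lemma simplex_exchange:
  assumes T: "simplex V E T" and pq: "p \<in> T" "q \<in> T" "p \<noteq> q"
    and y: "(y0, y1) \<in> impl_class E (p, q)"
  shows "simplex V E (T - {p, q} \<union> {y0, y1}) \<and> multiplex E (T - {p, q} \<union> {y0, y1}) = multiplex E T"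
proof -
  let ?R = "T - {p, q}"
  have "y0 \<noteq> y1"
    using y impl_class_subset edge_irrefl by blast
  have outside: "y0 \<notin> ?R" "y1 \<notin> ?R"
    using simplex_impl_class_outside[OF T pq y] by blast+
  have third: "(z, y0) \<in> color_class E (z, p)" "(y1, z) \<in> color_class E (q, z)" if "z \<in> ?R" for z
    using simplex_impl_class_third_vertex[OF T pq y] that impl_class_subset_color_class by blast+
  have y_color: "(y0, y1) \<in> color_class E (p, q)"
    using y impl_class_subset_color_class by blast
  note colors = y_color third mem_color_class_swap_both[OF y_color]
    mem_color_class_swap_both[OF third(1)] mem_color_class_swap_both[OF third(2)]
  define \<phi> where "\<phi> x = (if x = y0 then p else if x = y1 then q else x)" for x
  have \<phi>_simps: "\<phi> y0 = p" "\<phi> y1 = q" "\<And>z. z \<in> ?R \<Longrightarrow> \<phi> z = z"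
    unfolding \<phi>_def using \<open>y0 \<noteq> y1\<close> outside by auto
  have "bij_betw \<phi> (?R \<union> {y0, y1}) T"
    unfolding bij_betw_def inj_on_def using \<phi>_simps pq \<open>y0 \<noteq> y1\<close> outside by auto
  moreover have "(u, v) \<in> color_class E (\<phi> u, \<phi> v)"
    if "u \<in> ?R \<union> {y0, y1}" "v \<in> ?R \<union> {y0, y1}" "u \<noteq> v" for u v
    using that colors simplex_edge[OF T] color_class_refl by (auto simp: \<phi>_simps)
  ultimately show ?thesis
    using simplex_color_preserving_bij[OF T] by blast
qed

lemma maximal_simplex_exchange_impl_class:
  assumes T: "maximal_simplex V E T" and pq: "p \<in> T" "q \<in> T" "p \<noteq> q"
    and y: "(y0, y1) \<in> impl_class E (p, q)"
  shows "maximal_simplex V E (T - {p, q} \<union> {y0, y1}) \<and>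
    multiplex E (T - {p, q} \<union> {y0, y1}) = multiplex E T"
proof -
  let ?T' = "T - {p, q} \<union> {y0, y1}"
  have T_simplex: "simplex V E T"
    using T unfolding maximal_simplex_def by blast
  have "\<not> simplex V E U" if U: "?T' \<subset> U" for U
  proof
    assume U_simplex: "simplex V E U"
    have y_in: "y0 \<in> U" "y1 \<in> U" "y0 \<noteq> y1"
      using U y impl_class_subset edge_irrefl by blast+
    have "(p, q) \<in> impl_class E (y0, y1)"
      using y impl_class_sym by blast
    note reverse = simplex_exchange[OF U_simplex y_in this]
      simplex_impl_class_outside[OF U_simplex y_in this]
    have "T \<subset> U - {y0, y1} \<union> {p, q}"
      using U simplex_impl_class_outside[OF T_simplex pq y] reverse(2,3) by blast
    then show False
      using T reverse(1) unfolding maximal_simplex_def by blast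
  qed
  then show ?thesis
    using simplex_exchange[OF T_simplex pq y] unfolding maximal_simplex_def by blast
qed

lemma maximal_simplex_exchange:
  assumes "maximal_simplex V E T" "p \<in> T" "q \<in> T" "p \<noteq> q"
    and "(y0, y1) \<in> color_class E (p, q)"
  shows "maximal_simplex V E (T - {p, q} \<union> {y0, y1}) \<and>
    multiplex E (T - {p, q} \<union> {y0, y1}) = multiplex E T"
proof -
  consider "(y0, y1) \<in> impl_class E (p, q)" | "(y0, y1) \<in> impl_class E (q, p)"
    using assms(5) unfolding color_class_def converse_impl_class by blast
  then show ?thesis
  proof cases
    case 1
    then show ?thesis
      using maximal_simplex_exchange_impl_class[OF assms(1-4)] by blast
  next
    case 2
    then show ?thesis
      using maximal_simplex_exchange_impl_class[OF assms(1,3,2) assms(4)[symmetric]]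
      by (simp add: insert_commute)
  qed
qed

lemma simplex_color_class_star:
  assumes S: "simplex V E S" and "w \<in> S" "t1 \<in> S" "t2 \<in> S" "w \<noteq> t1" "w \<noteq> t2"
    and "(w, t1) \<in> color_class E e" "(w, t2) \<in> color_class E e"
  shows "t1 = t2"
proof -
  have "(w, t2) \<in> color_class E (w, t1)"
    using assms(7,8) color_class_eq by blast
  then have "{w, t2} = {w, t1}"
    using simplex_color_class_unique[OF S] assms(2-6) by blast
  then show ?thesis
    by (auto simp: doubleton_eq_iff)
qed

lemma adjacent_of_no_class_edge:
  assumes T: "simplex V E T" and S: "simplex V E S" and t: "t \<in> T" "t \<in> S" and w: "w \<in> S - T"
    and no_class_edge: "\<forall>z\<in>T. (z, w) \<notin> multiplex E T" and z: "z \<in> T"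
  shows "(z, w) \<in> E"
proof (rule ccontr)
  assume "(z, w) \<notin> E"
  have "(t, w) \<in> E"
    using simplex_edge[OF S] t w by blast
  then have "t \<noteq> z"
    using \<open>(z, w) \<notin> E\<close> by blast
  then have "(t, z) \<in> E"
    using simplex_edge[OF T] t z by blast
  then have "((t, z), (t, w)) \<in> Gamma E"
    unfolding Gamma_def using \<open>(t, w) \<in> E\<close> \<open>(z, w) \<notin> E\<close> edge_sym by blast
  then have "(t, w) \<in> color_class E (t, z)"
    using impl_class_Gamma impl_class_subset_color_class by blast
  then have "(t, w) \<in> multiplex E T"
    unfolding mem_multiplex_iff[OF T] using t z \<open>t \<noteq> z\<close> by blast
  then show False
    using no_class_edge t by blast
qed

lemma new_edge_color_unique_of_notin:
  assumes T: "simplex V E T" and S: "simplex V E S" and K: "2 \<le> card (T \<inter> S)" and w: "w \<in> S - T"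
    and adjacent: "\<forall>z\<in>T. (z, w) \<in> E" and no_class_edge: "\<forall>z\<in>T. (z, w) \<notin> multiplex E T"
    and z: "z \<in> T" "z \<notin> S" and z': "z' \<in> T" and zz': "(w, z') \<in> color_class E (w, z)"
  shows "z' = z"
proof -
  have "\<exists>t\<in>T \<inter> S. (w, t) \<notin> color_class E (w, z)"
  proof (rule ccontr)
    assume "\<not> ?thesis"
    moreover obtain t1 t2 where "t1 \<in> T \<inter> S" "t2 \<in> T \<inter> S" "t1 \<noteq> t2"
      using K by (rule two_le_cardE)
    ultimately show False
      using simplex_color_class_star[OF S, of w t1 t2] w by blast
  qed
  then obtain t where t: "t \<in> T" "t \<in> S" and wt: "(w, t) \<notin> color_class E (w, z)"
    by blast
  have "t \<noteq> z" "z \<noteq> t"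
    using t z by auto
  have edges: "(t, w) \<in> E" "(z, t) \<in> E"
    using adjacent simplex_edge[OF T] t z \<open>t \<noteq> z\<close> by auto
  have n1: "(w, z) \<notin> impl_class E (w, t)"
    using wt impl_class_sym impl_class_subset_color_class by blast
  have n2: "(w, z) \<notin> impl_class E (t, z)"
  proof
    assume "(w, z) \<in> impl_class E (t, z)"
    then have "(z, w) \<in> color_class E (z, t)"
      using impl_class_swap impl_class_subset_color_class by blast
    then show False
      using no_class_edge mem_multiplex_iff[OF T] t z \<open>z \<noteq> t\<close> by blast
  qed
  note triangle = triangle_lemma[OF edges n1 n2]
  from zz' consider "(w, z') \<in> impl_class E (w, z)" | "(z', w) \<in> impl_class E (w, z)"
    unfolding color_class_pair using impl_class_swap by blast
  then show ?thesis
  proof cases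
    case 1
    then have "(z', t) \<in> color_class E (z, t)"
      using triangle impl_class_subset_color_class by blast
    moreover have "z' \<noteq> t"
      using calculation color_class_subset edge_irrefl by blast
    ultimately have "{z', t} = {z, t}"
      using simplex_color_class_unique[OF T] t z z' \<open>z \<noteq> t\<close> by blast
    then show ?thesis
      by (auto simp: doubleton_eq_iff)
  next
    case 2
    then have "(t, z') \<in> impl_class E (t, w)"
      using triangle by blast
    moreover have "t \<noteq> z'"
      using calculation impl_class_subset edge_irrefl by blast
    ultimately have "(t, w) \<in> color_class E (t, z')"
      using impl_class_sym impl_class_subset_color_class by blast
    then show ?thesis
      using no_class_edge mem_multiplex_iff[OF T] t z' \<open>t \<noteq> z'\<close> by blast
  qed
qed

lemma insert_edge_cases:
  assumes "a \<in> insert w T" "b \<in> insert w T" "a \<noteq> b"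
  shows "(a \<in> T \<and> b \<in> T) \<or>
    (\<exists>z\<in>T. {a, b} = {w, z} \<and> color_class E (a, b) = color_class E (w, z))"
proof -
  consider "a \<in> T" "b \<in> T" | "a = w" "b \<in> T" | "b = w" "a \<in> T"
    using assms by auto
  then show ?thesis
    by cases (use color_class_swap in \<open>auto simp: insert_commute\<close>)
qed

lemma simplex_insert:
  assumes T: "simplex V E T" and w: "w \<notin> T"
    and adjacent: "\<forall>z\<in>T. (z, w) \<in> E" and no_class_edge: "\<forall>z\<in>T. (z, w) \<notin> multiplex E T"
    and new_unique: "\<forall>z\<in>T. \<forall>z'\<in>T. (w, z') \<in> color_class E (w, z) \<longrightarrow> z' = z"
  shows "simplex V E (insert w T)"
proof -
  have no_mix: "(w, z) \<notin> color_class E (x, y)" if "z \<in> T" "x \<in> T" "y \<in> T" "x \<noteq> y" for x y z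
  proof
    assume "(w, z) \<in> color_class E (x, y)"
    then have "(z, w) \<in> multiplex E T"
      unfolding mem_multiplex_iff[OF T] using that mem_color_class_swap by blast
    then show False
      using no_class_edge that(1) by blast
  qed
  show ?thesis
  proof (rule simplexI)
    show "finite (insert w T)" "2 \<le> card (insert w T)"
      using simplex_finite[OF T] simplex_card[OF T] w by auto
  next
    fix x y
    assume "x \<in> insert w T" "y \<in> insert w T" "x \<noteq> y"
    then consider "x \<in> T" "y \<in> T" | "x = w" "y \<in> T" | "y = w" "x \<in> T"
      by auto
    then show "(x, y) \<in> E"
      by cases (use simplex_edge[OF T] \<open>x \<noteq> y\<close> adjacent edge_sym in blast)+
  next
    fix x y u v
    assume xyuv: "x \<in> insert w T" "y \<in> insert w T" "u \<in> insert w T" "v \<in> insert w T"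
      "x \<noteq> y" "u \<noteq> v" and uv: "(u, v) \<in> color_class E (x, y)"
    from insert_edge_cases[OF xyuv(1,2,5)] show "{u, v} = {x, y}"
    proof (elim disjE bexE conjE)
      assume xy: "x \<in> T" "y \<in> T"
      from insert_edge_cases[OF xyuv(3,4,6)] show ?thesis
      proof (elim disjE bexE conjE)
        assume "u \<in> T" "v \<in> T"
        then show ?thesis
          using simplex_color_class_unique[OF T] xy xyuv uv by blast
      next
        fix z'
        assume "z' \<in> T" "{u, v} = {w, z'}"
        then show ?thesis
          using no_mix xy xyuv(5) uv mem_color_class_doubleton by blast
      qed
    next
      fix z
      assume z: "z \<in> T" "{x, y} = {w, z}" "color_class E (x, y) = color_class E (w, z)"
      from insert_edge_cases[OF xyuv(3,4,6)] show ?thesis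
      proof (elim disjE bexE conjE)
        assume "u \<in> T" "v \<in> T"
        moreover have "(w, z) \<in> color_class E (u, v)"
          using color_class_sym[of "(u, v)" "(w, z)"] uv z(3) by simp
        ultimately show ?thesis
          using no_mix[OF z(1)] xyuv(6) by blast
      next
        fix z'
        assume z': "z' \<in> T" "{u, v} = {w, z'}"
        then have "(w, z') \<in> color_class E (w, z)"
          using mem_color_class_doubleton[OF z'(2) uv] z(3) by simp
        then have "z' = z"
          using new_unique z(1) z'(1) by blast
        then show ?thesis
          using z(2) z'(2) by simp
      qed
    qed
  qed
qed

lemma simplex_insert_of_no_class_edge:
  assumes T: "simplex V E T" and S: "simplex V E S" and K: "2 \<le> card (T \<inter> S)" and w: "w \<in> S - T"
    and no_class_edge: "\<forall>z\<in>T. (z, w) \<notin> multiplex E T"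
  shows "simplex V E (insert w T)"
proof (rule simplex_insert[OF T])
  obtain t where t: "t \<in> T" "t \<in> S"
    using two_le_cardE[OF K] by blast
  show adjacent: "\<forall>z\<in>T. (z, w) \<in> E"
    using adjacent_of_no_class_edge[OF T S t w no_class_edge] by blast
  have "z' = z" if "z \<in> T" "z' \<in> T" "(w, z') \<in> color_class E (w, z)" for z z'
  proof (cases "z \<in> S \<and> z' \<in> S")
    case True
    then have "{w, z'} = {w, z}"
      using simplex_color_class_unique[OF S] w that by blast
    then show ?thesis
      by (auto simp: doubleton_eq_iff)
  next
    case False
    note unique = new_edge_color_unique_of_notin[OF T S K w adjacent no_class_edge]
    show ?thesis
      using False unique[of z z'] unique[of z' z] that color_class_sym color_class_eq by blast
  qed
  then show "\<forall>z\<in>T. \<forall>z'\<in>T. (w, z') \<in> color_class E (w, z) \<longrightarrow> z' = z"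
    by blast
qed (use w no_class_edge in auto)

lemma simplex_impl_class_shift:
  assumes T: "simplex V E T" and xy: "x \<in> T" "y \<in> T" "x \<noteq> y"
    and yw: "(y, w) \<in> impl_class E (x, y)"
  shows "T = {x, y}"
proof -
  have "t \<in> {x, y}" if t: "t \<in> T" for t
  proof (rule ccontr)
    assume "t \<notin> {x, y}"
    then have "(t, y) \<in> color_class E (t, x)"
      using simplex_impl_class_third_vertex[OF T xy yw] t impl_class_subset_color_class by blast
    then have "{t, y} = {t, x}"
      using simplex_color_class_unique[OF T] t xy \<open>t \<notin> {x, y}\<close> by blast
    then show False
      using xy(3) \<open>t \<notin> {x, y}\<close> by (auto simp: doubleton_eq_iff)
  qed
  then show ?thesis
    using xy by blast
qed

lemma simplex_impl_class_edge_pivot: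
  assumes T: "simplex V E T" and S: "simplex V E S" and K: "2 \<le> card (T \<inter> S)"
    and w: "w \<in> S - T" and xy: "x \<in> T" "y \<in> T" "x \<noteq> y" and z: "z \<in> T"
    and zw: "(z, w) \<in> impl_class E (x, y)"
  shows "z = x \<and> y \<notin> S"
proof -
  have "z \<in> {x, y}"
    using simplex_impl_class_outside[OF T xy zw] z by blast
  have w_not_in: "w \<noteq> x" "w \<noteq> y"
    using w xy by auto
  have "z \<noteq> y"
  proof
    assume "z = y"
    then have "T = {x, y}"
      using simplex_impl_class_shift[OF T xy] zw by blast
    then have "x \<in> S" "y \<in> S"
      using K two_le_cardE by (metis IntD1 IntD2 insertE singletonD)+
    moreover have "(y, w) \<in> color_class E (x, y)"
      using zw \<open>z = y\<close> impl_class_subset_color_class by blast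
    ultimately have "{y, w} = {x, y}"
      using simplex_color_class_unique[OF S] w xy(3) w_not_in by blast
    then show False
      using w_not_in by (auto simp: doubleton_eq_iff)
  qed
  with \<open>z \<in> {x, y}\<close> have "z = x"
    by blast
  moreover have "y \<notin> S"
  proof
    assume "y \<in> S"
    obtain t where t: "t \<in> T" "t \<in> S" "t \<noteq> y"
      using two_le_cardE[OF K] by (metis IntE)
    show False
    proof (cases "t = x")
      case True
      have "(x, w) \<in> color_class E (x, y)"
        using zw \<open>z = x\<close> impl_class_subset_color_class by blast
      then have "{x, w} = {x, y}"
        using simplex_color_class_unique[OF S] True t \<open>y \<in> S\<close> w xy(3) w_not_in by blast
      then show False
        using w_not_in by (auto simp: doubleton_eq_iff)
    next
      case False
      then have "(w, t) \<in> color_class E (y, t)"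
        using simplex_impl_class_third_vertex[OF T xy zw] t impl_class_subset_color_class by blast
      moreover have "w \<noteq> t"
        using w t by blast
      ultimately have "{w, t} = {y, t}"
        using simplex_color_class_unique[OF S] t \<open>y \<in> S\<close> w by blast
      then show False
        using w_not_in \<open>w \<noteq> t\<close> by (auto simp: doubleton_eq_iff)
    qed
  qed
  ultimately show ?thesis ..
qed

lemma larger_overlap_of_class_edge:
  assumes T: "maximal_simplex V E T" and S: "simplex V E S" and K: "2 \<le> card (T \<inter> S)"
    and w: "w \<in> S - T" and z: "z \<in> T" and zw: "(z, w) \<in> multiplex E T"
  obtains T' where "maximal_simplex V E T'" "multiplex E T' = multiplex E T"
    "card (T \<inter> S) < card (T' \<inter> S)"
proof -
  have T_simplex: "simplex V E T"
    using T unfolding maximal_simplex_def by blast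
  obtain x y where xy: "x \<in> T" "y \<in> T" "x \<noteq> y" and zw_xy: "(z, w) \<in> impl_class E (x, y)"
    using zw unfolding mem_multiplex_iff[OF T_simplex] color_class_pair by blast
  have "z = x" "y \<notin> S"
    using simplex_impl_class_edge_pivot[OF T_simplex S K w xy z zw_xy] by blast+
  define T' where "T' = T - {x, y} \<union> {x, w}"
  have T': "maximal_simplex V E T'" "multiplex E T' = multiplex E T"
    using maximal_simplex_exchange_impl_class[OF T xy zw_xy] \<open>z = x\<close> unfolding T'_def by blast+
  have "insert w (T \<inter> S) \<subseteq> T' \<inter> S"
    using w \<open>y \<notin> S\<close> unfolding T'_def by blast
  moreover have "finite (T' \<inter> S)"
    using simplex_finite S by blast
  ultimately have "card (insert w (T \<inter> S)) \<le> card (T' \<inter> S)"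
    by (rule card_mono[rotated])
  moreover have "card (insert w (T \<inter> S)) = Suc (card (T \<inter> S))"
    using simplex_finite[OF S] w by simp
  ultimately show ?thesis
    using that T' by simp
qed

lemma maximal_simplex_larger_overlap:
  assumes T: "maximal_simplex V E T" and S: "simplex V E S" and K: "2 \<le> card (T \<inter> S)"
    and w: "w \<in> S - T"
  obtains T' where "maximal_simplex V E T'" "multiplex E T' = multiplex E T"
    "card (T \<inter> S) < card (T' \<inter> S)"
proof (cases "\<exists>z\<in>T. (z, w) \<in> multiplex E T")
  case True
  then show ?thesis
    using larger_overlap_of_class_edge[OF T S K w] that by blast
next
  case False
  have T_simplex: "simplex V E T"
    using T unfolding maximal_simplex_def by blast
  have "simplex V E (insert w T)"
    using simplex_insert_of_no_class_edge[OF T_simplex S K w] False by blast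
  moreover have "T \<subset> insert w T"
    using w by blast
  ultimately show ?thesis
    using T unfolding maximal_simplex_def by blast
qed

lemma multiplex_eq_of_overlap:
  assumes "maximal_simplex V E T" "maximal_simplex V E S" "2 \<le> card (T \<inter> S)"
  shows "multiplex E T = multiplex E S"
  using assms
proof (induction "card S - card (T \<inter> S)" arbitrary: T rule: less_induct)
  case less
  have S_simplex: "simplex V E S" and T_simplex: "simplex V E T"
    using less.prems unfolding maximal_simplex_def by blast+
  show ?case
  proof (cases "S \<subseteq> T")
    case True
    then have "S = T"
      using less.prems(2) T_simplex unfolding maximal_simplex_def by blast
    then show ?thesis
      by simp
  next
    case False
    then obtain w where "w \<in> S - T"
      by blast
    with less.prems(1) S_simplex less.prems(3) obtain T' where T': "maximal_simplex V E T'"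
      "multiplex E T' = multiplex E T" "card (T \<inter> S) < card (T' \<inter> S)"
      by (rule maximal_simplex_larger_overlap)
    moreover have "card (T' \<inter> S) \<le> card S"
      using simplex_finite[OF S_simplex] by (simp add: card_mono)
    ultimately show ?thesis
      using less.hyps[of T'] less.prems by simp
  qed
qed

end

theorem corollary4p7:
  fixes V :: "'a set" and E :: "('a \<times> 'a) set" and S S' :: "'a set"
  assumes "undirected_graph V E"
    and "maximal_simplex V E S" and "maximal_simplex V E S'"
    and "multiplex E S \<inter> multiplex E S' \<noteq> {}"
  shows "multiplex E S = multiplex E S'"
proof -
  interpret ugraph V E
    using assms(1) by unfold_locales
  have S: "simplex V E S" and S': "simplex V E S'"
    using assms(2,3) unfolding maximal_simplex_def by blast+
  obtain f where "f \<in> multiplex E S" "f \<in> multiplex E S'"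
    using assms(4) by blast
  then obtain x y u v where xy: "x \<in> S" "y \<in> S" "x \<noteq> y" "f \<in> color_class E (x, y)"
    and uv: "u \<in> S'" "v \<in> S'" "u \<noteq> v" "f \<in> color_class E (u, v)"
    unfolding mem_multiplex_iff[OF S] mem_multiplex_iff[OF S'] by blast
  have "(u, v) \<in> color_class E (x, y)"
    using color_class_eq[OF xy(4)] color_class_eq[OF uv(4)]
      color_class_refl[OF simplex_edge[OF S' uv(1-3)]] by simp
  define T where "T = S - {x, y} \<union> {u, v}"
  have T: "maximal_simplex V E T" "multiplex E T = multiplex E S"
    using maximal_simplex_exchange[OF assms(2) xy(1-3) \<open>(u, v) \<in> color_class E (x, y)\<close>]
    unfolding T_def by blast+
  have "card {u, v} \<le> card (T \<inter> S')"
    using simplex_finite[OF S'] uv unfolding T_def by (intro card_mono) auto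
  then have "2 \<le> card (T \<inter> S')"
    using uv(3) by simp
  then show ?thesis
    using multiplex_eq_of_overlap[OF T(1) assms(3)] T(2) by simp
qed

end
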